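(* Let $(X,\mathrm{dist})$ be a complete metric space, $\Sigma$ a metric space, and $\{U_\sigma(t,\tau)\}_{\sigma\in\Sigma}$ a family of processes on $X$. Then the family is uniformly asymptotically compact if and only if it is totally uniformly dissipative.
   Context: A process on $X$ is a family of maps $U(t,\tau):X\to X$, indexed by reals $t\ge\tau$, with $U(\tau,\tau)=\mathrm{id}_X$ and $U(t,\tau)=U(t,s)U(s,\tau)$ for $t\ge s\ge\tau$; no continuity is assumed. For nonempty $B,C\subset X$, $\delta_X(B,C)=\sup_{x\in B}\inf_{\xi\in C}\mathrm{dist}(x,\xi)$. A set $K\subset X$ is uniformly attracting if for every bounded $C\subset X$, $\lim_{t-\tau\to\infty}\sup_{\sigma\in\Sigma}\delta_X(U_\sigma(t,\tau)C,K)=0$. The family is uniformly asymptotically compact if there exists a compact uniformly attracting set. A set $B\subset X$ is uniformly absorbing if for every bounded $C\subset X$ there is $t_e=t_e(C)$ with $U_\sigma(t,\tau)C\subset B$ for all $\sigma\in\Sigma$ whenever $t-\tau\ge t_e$. For $\varepsilon>0$, the $\varepsilon$-neighborhood of $K$ is $\mathcal{U}_\varepsilon(K)=\bigcup_{x\in K}\{\xi\in X:\mathrm{dist}(x,\xi)<\varepsilon\}$; $K$ is uniformly $\varepsilon$-absorbing if $\mathcal{U}_\varepsilon(K)$ is uniformly absorbing. The family is uniformly $\varepsilon$-dissipative if there is a finite uniformly $\varepsilon$-absorbing set, and totally uniformly dissipative if it is uniformly $\varepsilon$-dissipative for every $\varepsilon>0$. *)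

theory Defs
  imports "HOL-Analysis.Analysis"
begin

definition is_process :: "(real \<Rightarrow> real \<Rightarrow> 'a \<Rightarrow> 'a) \<Rightarrow> bool" where
  "is_process U \<longleftrightarrow>
     (\<forall>\<tau>. U \<tau> \<tau> = id) \<and>
     (\<forall>t s \<tau>. \<tau> \<le> s \<and> s \<le> t \<longrightarrow> U t \<tau> = U t s \<circ> U s \<tau>)"

definition family_of_processes :: "'s set \<Rightarrow> ('s \<Rightarrow> real \<Rightarrow> real \<Rightarrow> 'a \<Rightarrow> 'a) \<Rightarrow> bool" where
  "family_of_processes \<Sigma> U \<longleftrightarrow> (\<forall>\<sigma>\<in>\<Sigma>. is_process (U \<sigma>))"

text \<open>lim over t - tau to infinity of sup over sigma of the Hausdorff semi-distance
  delta(U(t,tau)C, K) equals 0, unfolded into epsilon form.\<close>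
definition uniformly_attracting ::
  "'s set \<Rightarrow> ('s \<Rightarrow> real \<Rightarrow> real \<Rightarrow> 'a::metric_space \<Rightarrow> 'a) \<Rightarrow> 'a set \<Rightarrow> bool" where
  "uniformly_attracting \<Sigma> U K \<longleftrightarrow>
     (\<forall>C. bounded C \<longrightarrow> (\<forall>\<epsilon>>0. \<exists>T. \<forall>\<sigma>\<in>\<Sigma>. \<forall>t \<tau>. \<tau> \<le> t \<and> t - \<tau> \<ge> T \<longrightarrow>
        (\<forall>x\<in>C. \<exists>\<xi>\<in>K. dist (U \<sigma> t \<tau> x) \<xi> < \<epsilon>)))"

definition uniformly_asymptotically_compact ::
  "'s set \<Rightarrow> ('s \<Rightarrow> real \<Rightarrow> real \<Rightarrow> 'a::metric_space \<Rightarrow> 'a) \<Rightarrow> bool" where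
  "uniformly_asymptotically_compact \<Sigma> U \<longleftrightarrow>
     (\<exists>K. compact K \<and> uniformly_attracting \<Sigma> U K)"

definition uniformly_absorbing ::
  "'s set \<Rightarrow> ('s \<Rightarrow> real \<Rightarrow> real \<Rightarrow> 'a::metric_space \<Rightarrow> 'a) \<Rightarrow> 'a set \<Rightarrow> bool" where
  "uniformly_absorbing \<Sigma> U B \<longleftrightarrow>
     (\<forall>C. bounded C \<longrightarrow> (\<exists>te. \<forall>\<sigma>\<in>\<Sigma>. \<forall>t \<tau>. \<tau> \<le> t \<and> t - \<tau> \<ge> te \<longrightarrow>
        U \<sigma> t \<tau> ` C \<subseteq> B))"

definition eps_nbhd :: "real \<Rightarrow> 'a::metric_space set \<Rightarrow> 'a set" where
  "eps_nbhd \<epsilon> K = (\<Union>x\<in>K. {\<xi>. dist x \<xi> < \<epsilon>})"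

definition uniformly_eps_absorbing ::
  "'s set \<Rightarrow> ('s \<Rightarrow> real \<Rightarrow> real \<Rightarrow> 'a::metric_space \<Rightarrow> 'a) \<Rightarrow> real \<Rightarrow> 'a set \<Rightarrow> bool" where
  "uniformly_eps_absorbing \<Sigma> U \<epsilon> K \<longleftrightarrow> uniformly_absorbing \<Sigma> U (eps_nbhd \<epsilon> K)"

definition uniformly_eps_dissipative ::
  "'s set \<Rightarrow> ('s \<Rightarrow> real \<Rightarrow> real \<Rightarrow> 'a::metric_space \<Rightarrow> 'a) \<Rightarrow> real \<Rightarrow> bool" where
  "uniformly_eps_dissipative \<Sigma> U \<epsilon> \<longleftrightarrow>
     (\<exists>K. finite K \<and> uniformly_eps_absorbing \<Sigma> U \<epsilon> K)"

definition totally_uniformly_dissipative ::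
  "'s set \<Rightarrow> ('s \<Rightarrow> real \<Rightarrow> real \<Rightarrow> 'a::metric_space \<Rightarrow> 'a) \<Rightarrow> bool" where
  "totally_uniformly_dissipative \<Sigma> U \<longleftrightarrow> (\<forall>\<epsilon>>0. uniformly_eps_dissipative \<Sigma> U \<epsilon>)"

end

theory Submission
  imports Defs
begin

text \<open>A compact attracting set can be covered by finitely many small balls, so the centres of
  these balls form a finite set absorbing in its \<open>\<epsilon>\<close>-neighbourhood.  Conversely, given finite
  sets \<open>F n\<close> whose \<open>1/(n+1)\<close>-neighbourhoods absorb, the set
  \<open>K = \<Inter>n. \<Union>f\<in>F n. cball f (1/(n+1))\<close> is closed and totally bounded, hence compact in a
  complete space.  If \<open>K\<close> were not attracting, there would be trajectories that stay \<open>\<epsilon>\<close>-far from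
  \<open>K\<close> for arbitrarily long times; such a sequence eventually lies in each neighbourhood of \<open>F n\<close>,
  so it is totally bounded and has a subsequence converging to a point of \<open>K\<close>, a contradiction.
  Neither direction uses the process identities, nor any continuity of the maps.\<close>

lemma uniformly_absorbing_mono:
  "uniformly_absorbing \<Sigma> U B \<Longrightarrow> B \<subseteq> B' \<Longrightarrow> uniformly_absorbing \<Sigma> U B'"
  unfolding uniformly_absorbing_def by (meson order_trans)

lemma eps_nbhd_subset_cballs: "eps_nbhd \<epsilon> F \<subseteq> (\<Union>f\<in>F. cball f \<epsilon>)"
  unfolding eps_nbhd_def by (auto simp: less_imp_le)

lemma uniformly_attracting_imp_absorbing_eps_nbhd:
  assumes "uniformly_attracting \<Sigma> U K" and "\<epsilon> > 0"
  shows "uniformly_absorbing \<Sigma> U (eps_nbhd \<epsilon> K)"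
  using assms unfolding uniformly_attracting_def uniformly_absorbing_def eps_nbhd_def
  by (fastforce simp: dist_commute)

lemma compact_imp_finite_eps_nbhd_cover:
  assumes "compact K" and "\<epsilon> > 0"
  obtains F where "finite F" and "eps_nbhd (\<epsilon>/2) K \<subseteq> eps_nbhd \<epsilon> F"
proof -
  obtain F where F: "finite F" "K \<subseteq> (\<Union>x\<in>F. ball x (\<epsilon>/2))"
    using assms unfolding compact_eq_totally_bounded by (meson half_gt_zero)
  have "eps_nbhd (\<epsilon>/2) K \<subseteq> eps_nbhd \<epsilon> F"
  proof
    fix y assume "y \<in> eps_nbhd (\<epsilon>/2) K"
    then obtain \<xi> where "\<xi> \<in> K" "dist \<xi> y < \<epsilon>/2" unfolding eps_nbhd_def by blast
    moreover obtain f where "f \<in> F" "dist f \<xi> < \<epsilon>/2" using F(2) \<open>\<xi> \<in> K\<close> by auto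
    ultimately show "y \<in> eps_nbhd \<epsilon> F"
      unfolding eps_nbhd_def using dist_triangle[of f y \<xi>] by fastforce
  qed
  with F(1) show thesis by (rule that)
qed

lemma uniformly_asymptotically_compact_imp_totally_dissipative:
  assumes "uniformly_asymptotically_compact \<Sigma> U"
  shows "totally_uniformly_dissipative \<Sigma> U"
  unfolding totally_uniformly_dissipative_def
proof (intro allI impI)
  fix \<epsilon> :: real assume "\<epsilon> > 0"
  obtain K where "compact K" "uniformly_attracting \<Sigma> U K"
    using assms unfolding uniformly_asymptotically_compact_def by blast
  obtain F where "finite F" "eps_nbhd (\<epsilon>/2) K \<subseteq> eps_nbhd \<epsilon> F"
    using compact_imp_finite_eps_nbhd_cover[OF \<open>compact K\<close> \<open>\<epsilon> > 0\<close>] .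
  moreover have "uniformly_absorbing \<Sigma> U (eps_nbhd (\<epsilon>/2) K)"
    using \<open>uniformly_attracting \<Sigma> U K\<close> \<open>\<epsilon> > 0\<close>
    by (simp add: uniformly_attracting_imp_absorbing_eps_nbhd)
  ultimately show "uniformly_eps_dissipative \<Sigma> U \<epsilon>"
    unfolding uniformly_eps_dissipative_def uniformly_eps_absorbing_def
    using uniformly_absorbing_mono by blast
qed

lemma compact_Inter_finite_cballs:
  fixes G :: "'i \<Rightarrow> 'a::{metric_space,complete_space} set" and r :: "'i \<Rightarrow> real"
  assumes "\<And>n. finite (G n)" and "\<And>e. e > 0 \<Longrightarrow> \<exists>n. r n < e"
  shows "compact (\<Inter>n. \<Union>f\<in>G n. cball f (r n))"
proof -
  let ?S = "\<Inter>n. \<Union>f\<in>G n. cball f (r n)"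
  have "closed ?S"
    using assms(1) by (intro closed_INT ballI closed_UN) auto
  moreover have "\<exists>k. finite k \<and> ?S \<subseteq> (\<Union>x\<in>k. ball x e)" if "e > 0" for e
  proof -
    obtain n where "r n < e" using assms(2) \<open>e > 0\<close> by blast
    have "?S \<subseteq> (\<Union>f\<in>G n. cball f (r n))" by blast
    also have "\<dots> \<subseteq> (\<Union>x\<in>G n. ball x e)"
      using \<open>r n < e\<close> by (intro UN_mono) auto
    finally have "?S \<subseteq> (\<Union>x\<in>G n. ball x e)" .
    with assms(1) show ?thesis by blast
  qed
  ultimately show ?thesis
    unfolding compact_eq_totally_bounded using complete_eq_closed by blast
qed

lemma convergent_subseq_in_Inter_cballs:
  fixes z :: "nat \<Rightarrow> 'a::{metric_space,complete_space}"
    and F :: "'i \<Rightarrow> 'a set" and r :: "'i \<Rightarrow> real"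
  assumes fin: "\<And>n. finite (F n)" and pos: "\<And>n. r n > 0"
    and r: "\<And>e. e > 0 \<Longrightarrow> \<exists>n. r n < e"
    and ev: "\<And>n. eventually (\<lambda>k. z k \<in> eps_nbhd (r n) (F n)) sequentially"
  obtains l \<rho> where "l \<in> (\<Inter>n. \<Union>f\<in>F n. cball f (r n))" "strict_mono \<rho>" "(z \<circ> \<rho>) \<longlonglongrightarrow> l"
proof -
  obtain N where N: "\<And>n k. k \<ge> N n \<Longrightarrow> z k \<in> eps_nbhd (r n) (F n)"
    using ev unfolding eventually_sequentially by metis
  \<comment> \<open>Adding the finitely many early terms to \<open>F n\<close> traps the whole sequence in a compact set.\<close>
  define G where "G n = F n \<union> z ` {..<N n}" for n
  define S where "S = (\<Inter>n. \<Union>f\<in>G n. cball f (r n))"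
  have "compact S"
    unfolding S_def by (rule compact_Inter_finite_cballs) (auto simp: G_def fin r)
  moreover have "\<forall>k. z k \<in> S"
  proof
    fix k
    have "z k \<in> (\<Union>f\<in>G n. cball f (r n))" for n
    proof (cases "k < N n")
      case True
      then have "z k \<in> G n" unfolding G_def by blast
      then show ?thesis using pos[of n] by (auto intro!: bexI[of _ "z k"])
    next
      case False
      then have "z k \<in> eps_nbhd (r n) (F n)" using N by simp
      then have "z k \<in> (\<Union>f\<in>F n. cball f (r n))" using eps_nbhd_subset_cballs ..
      then show ?thesis unfolding G_def by blast
    qed
    then show "z k \<in> S" unfolding S_def by blast
  qed
  ultimately obtain l \<rho> where "strict_mono \<rho>" "(z \<circ> \<rho>) \<longlonglongrightarrow> l"
    using seq_compactE compact_imp_seq_compact by blast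
  have "l \<in> (\<Union>f\<in>F n. cball f (r n))" for n
  proof (rule Lim_in_closed_set)
    show "closed (\<Union>f\<in>F n. cball f (r n))" using fin by (intro closed_UN) auto
    have "eventually (\<lambda>k. z k \<in> (\<Union>f\<in>F n. cball f (r n))) sequentially"
      using ev[of n] by (rule eventually_mono) (use eps_nbhd_subset_cballs in blast)
    then show "eventually (\<lambda>k. (z \<circ> \<rho>) k \<in> (\<Union>f\<in>F n. cball f (r n))) sequentially"
      using eventually_subseq[OF \<open>strict_mono \<rho>\<close>] by simp
  qed (use \<open>(z \<circ> \<rho>) \<longlonglongrightarrow> l\<close> in \<open>simp_all add: comp_def\<close>)
  then show thesis using that \<open>strict_mono \<rho>\<close> \<open>(z \<circ> \<rho>) \<longlonglongrightarrow> l\<close> by blast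
qed

lemma not_uniformly_attracting_imp_escaping_seq:
  assumes "\<not> uniformly_attracting \<Sigma> U K"
  obtains C \<epsilon> z where "bounded C" "\<epsilon> > 0"
    and "\<forall>k::nat. \<exists>\<sigma>\<in>\<Sigma>. \<exists>\<tau> t. \<tau> \<le> t \<and> t - \<tau> \<ge> real k \<and> z k \<in> U \<sigma> t \<tau> ` C"
    and "\<forall>k. \<forall>\<xi>\<in>K. dist (z k) \<xi> \<ge> \<epsilon>"
proof -
  obtain C \<epsilon> where "bounded C" "\<epsilon> > 0" and
    "\<forall>k::nat. \<exists>y. (\<exists>\<sigma>\<in>\<Sigma>. \<exists>\<tau> t. \<tau> \<le> t \<and> t - \<tau> \<ge> real k \<and> y \<in> U \<sigma> t \<tau> ` C) \<and>
      (\<forall>\<xi>\<in>K. dist y \<xi> \<ge> \<epsilon>)"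
    using assms unfolding uniformly_attracting_def by (meson image_eqI not_less)
  then show thesis using that by metis
qed

lemma uniformly_attracting_Inter_cballs:
  fixes F :: "'i \<Rightarrow> 'a::{metric_space,complete_space} set" and r :: "'i \<Rightarrow> real"
  assumes fin: "\<And>n. finite (F n)" and pos: "\<And>n. r n > 0"
    and r: "\<And>e. e > 0 \<Longrightarrow> \<exists>n. r n < e"
    and absorb: "\<And>n. uniformly_absorbing \<Sigma> U (eps_nbhd (r n) (F n))"
  shows "uniformly_attracting \<Sigma> U (\<Inter>n. \<Union>f\<in>F n. cball f (r n))"
    (is "uniformly_attracting \<Sigma> U ?K")
proof (rule ccontr)
  assume "\<not> uniformly_attracting \<Sigma> U ?K"
  then obtain C \<epsilon> z where "bounded C" "\<epsilon> > 0"
    and escape: "\<forall>k::nat. \<exists>\<sigma>\<in>\<Sigma>. \<exists>\<tau> t. \<tau> \<le> t \<and> t - \<tau> \<ge> real k \<and> z k \<in> U \<sigma> t \<tau> ` C"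
    and far: "\<forall>k. \<forall>\<xi>\<in>?K. dist (z k) \<xi> \<ge> \<epsilon>"
    by (rule not_uniformly_attracting_imp_escaping_seq)
  have ev: "eventually (\<lambda>k. z k \<in> eps_nbhd (r n) (F n)) sequentially" for n
  proof -
    obtain T where T: "\<forall>\<sigma>\<in>\<Sigma>. \<forall>t \<tau>. \<tau> \<le> t \<and> t - \<tau> \<ge> T \<longrightarrow> U \<sigma> t \<tau> ` C \<subseteq> eps_nbhd (r n) (F n)"
      using absorb[of n] \<open>bounded C\<close> unfolding uniformly_absorbing_def by blast
    have "z k \<in> eps_nbhd (r n) (F n)" if "k \<ge> nat \<lceil>T\<rceil>" for k
    proof -
      obtain \<sigma> \<tau> t where "\<sigma> \<in> \<Sigma>" "\<tau> \<le> t" "t - \<tau> \<ge> real k" "z k \<in> U \<sigma> t \<tau> ` C"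
        using escape by blast
      moreover from this(3) that have "t - \<tau> \<ge> T" by linarith
      ultimately show ?thesis using T by blast
    qed
    then show ?thesis unfolding eventually_sequentially by blast
  qed
  obtain l \<rho> where "l \<in> ?K" "strict_mono \<rho>" "(z \<circ> \<rho>) \<longlonglongrightarrow> l"
    using convergent_subseq_in_Inter_cballs[OF fin pos r ev] .
  have "eventually (\<lambda>k. dist ((z \<circ> \<rho>) k) l < \<epsilon>) sequentially"
    using \<open>(z \<circ> \<rho>) \<longlonglongrightarrow> l\<close> \<open>\<epsilon> > 0\<close> by (rule tendstoD)
  then obtain k where "dist (z (\<rho> k)) l < \<epsilon>"
    unfolding eventually_sequentially by fastforce
  with far \<open>l \<in> ?K\<close> show False by (meson not_less)
qed

lemma totally_dissipative_imp_uniformly_asymptotically_compact: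
  fixes U :: "'s \<Rightarrow> real \<Rightarrow> real \<Rightarrow> 'a::{metric_space,complete_space} \<Rightarrow> 'a"
  assumes "totally_uniformly_dissipative \<Sigma> U"
  shows "uniformly_asymptotically_compact \<Sigma> U"
proof -
  define r :: "nat \<Rightarrow> real" where "r n = 1 / (real n + 1)" for n
  have pos: "r n > 0" for n unfolding r_def by simp
  have r: "\<exists>n. r n < e" if "e > 0" for e
  proof -
    obtain n where "inverse (real (Suc n)) < e" using reals_Archimedean \<open>e > 0\<close> by blast
    then show ?thesis unfolding r_def by (auto simp: field_simps)
  qed
  have "\<forall>n. \<exists>F. finite F \<and> uniformly_absorbing \<Sigma> U (eps_nbhd (r n) F)"
    using assms pos
    unfolding totally_uniformly_dissipative_def uniformly_eps_dissipative_def
      uniformly_eps_absorbing_def by blast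
  then obtain F where "\<forall>n. finite (F n) \<and> uniformly_absorbing \<Sigma> U (eps_nbhd (r n) (F n))"
    by (rule choice[THEN exE])
  then have fin: "\<And>n. finite (F n)"
    and absorb: "\<And>n. uniformly_absorbing \<Sigma> U (eps_nbhd (r n) (F n))"
    by simp_all
  have "compact (\<Inter>n. \<Union>f\<in>F n. cball f (r n))"
    by (rule compact_Inter_finite_cballs[OF fin r])
  moreover have "uniformly_attracting \<Sigma> U (\<Inter>n. \<Union>f\<in>F n. cball f (r n))"
    by (rule uniformly_attracting_Inter_cballs[OF fin pos r absorb])
  ultimately show ?thesis
    unfolding uniformly_asymptotically_compact_def by blast
qed

theorem theorem3p8:
  fixes \<Sigma> :: "'s::metric_space set"
    and U :: "'s \<Rightarrow> real \<Rightarrow> real \<Rightarrow> 'a::{metric_space,complete_space} \<Rightarrow> 'a"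
  assumes "family_of_processes \<Sigma> U"
  shows "uniformly_asymptotically_compact \<Sigma> U \<longleftrightarrow> totally_uniformly_dissipative \<Sigma> U"
  using uniformly_asymptotically_compact_imp_totally_dissipative
    totally_dissipative_imp_uniformly_asymptotically_compact by blast

end
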